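(* Let $a>b\ge 1$ be integers, $n=a+b$, and let $\breve{K}_{a,b}$ be the Mycielskian of the complete bipartite graph $K_{a,b}$. Then $$E_{\chi^+}(\breve{K}_{a,b})=2+\frac{2a-1}{2a+2b+1},\qquad V_{\chi^+}(\breve{K}_{a,b})=\frac{16a^2+4b^2+8a^2b+8b^2a+24ab+8a+2b}{(2n+1)^3}.$$
   Context: Mycielskian: for a graph $G$ with vertex set $\{v_1,\dots,v_m\}$, its Mycielskian $\breve{G}$ is the graph with vertex set $\{v_1,\dots,v_m\}\cup\{u_1,\dots,u_m\}\cup\{u\}$ (all new, distinct vertices) whose edges are: all edges of $G$; the edge $u_iv_j$ whenever $v_iv_j$ is an edge of $G$; and the edges $uu_i$ for all $i$. Colouring parameters: for a proper colouring $\mathcal{C}=\{c_1,\dots,c_k\}$ of $G$ with colours indexed $1,\dots,k$, let $\theta(c_i)$ be the number of vertices of colour $c_i$ and $f(i)=\theta(c_i)/|V(G)|$. The colouring mean is $\mu_{\mathcal{C}}=\sum_i i\,f(i)$, the colouring variance is $\sum_i (i-\mu_{\mathcal{C}})^2 f(i)$, and the colouring sum is $\sum_i i\,\theta(c_i)$. The $\chi^+$-chromatic mean $E_{\chi^+}(G)$ (resp. $\chi^+$-chromatic variance $V_{\chi^+}(G)$) is the colouring mean (resp. variance) of a proper colouring of $G$ with exactly $\chi(G)$ colours $c_1,\dots,c_{\chi(G)}$ whose colouring sum is maximum among all such colourings. *)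

theory Defs
  imports Complex_Main
begin

text \<open>Simple graphs: a vertex set V and a symmetric irreflexive adjacency relation E
  (only edges between vertices of V matter).\<close>

datatype 'v myc_vertex = Orig 'v | Copy 'v | Apex

definition myc_verts :: "'v set \<Rightarrow> 'v myc_vertex set" where
  "myc_verts V = Orig ` V \<union> Copy ` V \<union> {Apex}"

fun myc_adj :: "('v \<Rightarrow> 'v \<Rightarrow> bool) \<Rightarrow> 'v myc_vertex \<Rightarrow> 'v myc_vertex \<Rightarrow> bool" where
  "myc_adj E (Orig x) (Orig y) = E x y"
| "myc_adj E (Copy x) (Orig y) = E x y"
| "myc_adj E (Orig x) (Copy y) = E x y"
| "myc_adj E Apex (Copy y) = True"
| "myc_adj E (Copy x) Apex = True"
| "myc_adj E _ _ = False"

definition Kab_verts :: "nat \<Rightarrow> nat \<Rightarrow> nat set" where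
  "Kab_verts a b = {0..<a+b}"

definition Kab_adj :: "nat \<Rightarrow> nat \<Rightarrow> nat \<Rightarrow> nat \<Rightarrow> bool" where
  "Kab_adj a b x y = ((x < a \<and> a \<le> y \<and> y < a + b) \<or> (y < a \<and> a \<le> x \<and> x < a + b))"

definition proper_colouring :: "'v set \<Rightarrow> ('v \<Rightarrow> 'v \<Rightarrow> bool) \<Rightarrow> nat \<Rightarrow> ('v \<Rightarrow> nat) \<Rightarrow> bool" where
  "proper_colouring V E k c \<longleftrightarrow>
     (\<forall>v\<in>V. c v \<in> {1..k}) \<and> (\<forall>x\<in>V. \<forall>y\<in>V. E x y \<longrightarrow> c x \<noteq> c y)"

definition chromatic_number :: "'v set \<Rightarrow> ('v \<Rightarrow> 'v \<Rightarrow> bool) \<Rightarrow> nat" where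
  "chromatic_number V E = (LEAST k. \<exists>c. proper_colouring V E k c)"

definition theta :: "'v set \<Rightarrow> ('v \<Rightarrow> nat) \<Rightarrow> nat \<Rightarrow> nat" where
  "theta V c i = card {v\<in>V. c v = i}"

definition colouring_sum :: "'v set \<Rightarrow> nat \<Rightarrow> ('v \<Rightarrow> nat) \<Rightarrow> nat" where
  "colouring_sum V k c = (\<Sum>i=1..k. i * theta V c i)"

definition colouring_mean :: "'v set \<Rightarrow> nat \<Rightarrow> ('v \<Rightarrow> nat) \<Rightarrow> real" where
  "colouring_mean V k c = (\<Sum>i=1..k. real i * (real (theta V c i) / real (card V)))"

definition colouring_variance :: "'v set \<Rightarrow> nat \<Rightarrow> ('v \<Rightarrow> nat) \<Rightarrow> real" where
  "colouring_variance V k c =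
     (\<Sum>i=1..k. (real i - colouring_mean V k c)^2 * (real (theta V c i) / real (card V)))"

definition chi_plus_colouring :: "'v set \<Rightarrow> ('v \<Rightarrow> 'v \<Rightarrow> bool) \<Rightarrow> ('v \<Rightarrow> nat) \<Rightarrow> bool" where
  "chi_plus_colouring V E c \<longleftrightarrow>
     (let k = chromatic_number V E in
       proper_colouring V E k c \<and>
       (\<forall>c'. proper_colouring V E k c' \<longrightarrow> colouring_sum V k c' \<le> colouring_sum V k c))"

definition E_chi_plus :: "'v set \<Rightarrow> ('v \<Rightarrow> 'v \<Rightarrow> bool) \<Rightarrow> real" where
  "E_chi_plus V E = colouring_mean V (chromatic_number V E) (SOME c. chi_plus_colouring V E c)"

definition V_chi_plus :: "'v set \<Rightarrow> ('v \<Rightarrow> 'v \<Rightarrow> bool) \<Rightarrow> real" where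
  "V_chi_plus V E = colouring_variance V (chromatic_number V E) (SOME c. chi_plus_colouring V E c)"

end

theory Submission
  imports Defs
begin

text \<open>The apex, the copies of one vertex from each side of \<open>K\<^sub>a\<^sub>,\<^sub>b\<close> and the two
  corresponding original vertices form a 5-cycle, so three colours are needed, they suffice, and
  every 3-colouring uses colour 1. Each colour class is independent, and for \<open>b < a\<close> an
  independent set has at most \<open>2a\<close> vertices. For a 3-colouring the colouring sum is
  \<open>2|V| - \<theta>\<^sub>1 + \<theta>\<^sub>3 \<le> 2(2a + 2b + 1) - 1 + 2a\<close>, with equality for the colouring that
  gives the apex colour 1, the vertices over the larger side colour 3 and the rest colour 2.
  Hence every \<open>\<chi>\<^sup>+\<close>-colouring has colour classes of sizes \<open>1, 2b, 2a\<close>, which determine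
  its mean and variance.\<close>

lemma finite_myc_verts: "finite V \<Longrightarrow> finite (myc_verts V)"
  by (simp add: myc_verts_def)

lemma myc_verts_iff [simp]:
  "Orig x \<in> myc_verts V \<longleftrightarrow> x \<in> V"
  "Copy x \<in> myc_verts V \<longleftrightarrow> x \<in> V"
  "Apex \<in> myc_verts V"
  by (auto simp: myc_verts_def)

lemma card_myc_verts:
  assumes "finite V"
  shows "card (myc_verts V) = 2 * card V + 1"
proof -
  have "card (myc_verts V) = card (Orig ` V \<union> Copy ` V) + card {Apex :: 'a myc_vertex}"
    unfolding myc_verts_def using assms by (intro card_Un_disjoint) auto
  also have "card (Orig ` V \<union> Copy ` V) = card (Orig ` V) + card (Copy ` V)"
    using assms by (intro card_Un_disjoint) auto
  also have "\<dots> = card V + card V"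
    by (simp add: card_image inj_on_def)
  finally show ?thesis by simp
qed

lemma proper_colouring_range:
  "proper_colouring V E k c \<Longrightarrow> v \<in> V \<Longrightarrow> c v \<in> {1..k}"
  unfolding proper_colouring_def by blast

lemma proper_colouring_adj:
  "proper_colouring V E k c \<Longrightarrow> u \<in> V \<Longrightarrow> v \<in> V \<Longrightarrow> E u v \<Longrightarrow> c u \<noteq> c v"
  unfolding proper_colouring_def by blast

lemma sum_theta_eq_card:
  assumes "finite V" and "finite K" and "c ` V \<subseteq> K"
  shows "(\<Sum>i\<in>K. theta V c i) = card V"
proof -
  have "(\<Union>i\<in>K. {v \<in> V. c v = i}) = V"
    using assms(3) by auto
  moreover have "card (\<Union>i\<in>K. {v \<in> V. c v = i}) = (\<Sum>i\<in>K. card {v \<in> V. c v = i})"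
    using assms(1,2) by (intro card_UN_disjoint) auto
  ultimately show ?thesis
    unfolding theta_def by simp
qed

lemma atLeastAtMost_one_three: "{1..3::nat} = {1, 2, 3}"
  by auto

lemma colouring_sum_three: "colouring_sum V 3 c = theta V c 1 + 2 * theta V c 2 + 3 * theta V c 3"
  unfolding colouring_sum_def atLeastAtMost_one_three by simp

lemma theta_sum_three:
  assumes "finite V" and "proper_colouring V E 3 c"
  shows "theta V c 1 + theta V c 2 + theta V c 3 = card V"
proof -
  have "c ` V \<subseteq> {1..3}"
    using proper_colouring_range[OF assms(2)] by blast
  then show ?thesis
    using sum_theta_eq_card[OF assms(1), of "{1..3}" c] unfolding atLeastAtMost_one_three by simp
qed

lemma colouring_mean_three:
  "colouring_mean V 3 c
     = (real (theta V c 1) + 2 * real (theta V c 2) + 3 * real (theta V c 3)) / real (card V)"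
  unfolding colouring_mean_def atLeastAtMost_one_three by (simp add: add_divide_distrib)

lemma colouring_variance_three:
  "colouring_variance V 3 c
     = ((1 - colouring_mean V 3 c)^2 * real (theta V c 1) + (2 - colouring_mean V 3 c)^2 * real (theta V c 2)
        + (3 - colouring_mean V 3 c)^2 * real (theta V c 3)) / real (card V)"
  unfolding colouring_variance_def atLeastAtMost_one_three by (simp add: add_divide_distrib)

lemma five_cycle_colours:
  assumes "p \<noteq> q" "q \<noteq> r" "r \<noteq> s" "s \<noteq> t" "t \<noteq> p"
  shows "3 \<le> card {p, q, r, s, t}"
  using assms by (auto simp: card_insert_if)


abbreviation myc_Kab_verts :: "nat \<Rightarrow> nat \<Rightarrow> nat myc_vertex set" where
  "myc_Kab_verts a b \<equiv> myc_verts (Kab_verts a b)"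

abbreviation myc_Kab_adj :: "nat \<Rightarrow> nat \<Rightarrow> nat myc_vertex \<Rightarrow> nat myc_vertex \<Rightarrow> bool" where
  "myc_Kab_adj a b \<equiv> myc_adj (Kab_adj a b)"

lemma finite_myc_Kab: "finite (myc_Kab_verts a b)"
  by (simp add: finite_myc_verts Kab_verts_def)

lemma card_myc_Kab: "card (myc_Kab_verts a b) = 2 * a + 2 * b + 1"
  by (simp add: card_myc_verts Kab_verts_def)

definition myc_Kab_pentagon :: "nat \<Rightarrow> nat myc_vertex set" where
  "myc_Kab_pentagon a = {Apex, Copy 0, Orig a, Orig 0, Copy a}"

lemma myc_Kab_pentagon_subset: "1 \<le> b \<Longrightarrow> myc_Kab_pentagon a \<subseteq> myc_Kab_verts a b"
  by (simp add: myc_Kab_pentagon_def Kab_verts_def)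

lemma colours_myc_Kab_pentagon:
  assumes c: "proper_colouring (myc_Kab_verts a b) (myc_Kab_adj a b) k c"
    and "1 \<le> a" "1 \<le> b"
  shows "c ` myc_Kab_pentagon a \<subseteq> {1..k}" and "3 \<le> card (c ` myc_Kab_pentagon a)"
proof -
  have mem: "Apex \<in> myc_Kab_verts a b" "Copy 0 \<in> myc_Kab_verts a b" "Orig a \<in> myc_Kab_verts a b"
    "Orig 0 \<in> myc_Kab_verts a b" "Copy a \<in> myc_Kab_verts a b"
    using assms(2,3) by (simp_all add: Kab_verts_def)
  then show "c ` myc_Kab_pentagon a \<subseteq> {1..k}"
    unfolding myc_Kab_pentagon_def using proper_colouring_range[OF c] by simp
  have adj: "myc_Kab_adj a b Apex (Copy 0)" "myc_Kab_adj a b (Copy 0) (Orig a)"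
    "myc_Kab_adj a b (Orig a) (Orig 0)" "myc_Kab_adj a b (Orig 0) (Copy a)"
    "myc_Kab_adj a b (Copy a) Apex"
    using assms(2,3) by (auto simp: Kab_adj_def)
  note neq = proper_colouring_adj[OF c]
  show "3 \<le> card (c ` myc_Kab_pentagon a)"
    unfolding myc_Kab_pentagon_def image_insert image_empty
    using neq[OF mem(1,2) adj(1)] neq[OF mem(2,3) adj(2)] neq[OF mem(3,4) adj(3)]
      neq[OF mem(4,5) adj(4)] neq[OF mem(5,1) adj(5)]
    by (rule five_cycle_colours)
qed

lemma three_le_colours_myc_Kab:
  assumes "proper_colouring (myc_Kab_verts a b) (myc_Kab_adj a b) k c" "1 \<le> a" "1 \<le> b"
  shows "3 \<le> k"
proof -
  have "card (c ` myc_Kab_pentagon a) \<le> card {1..k}"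
    using colours_myc_Kab_pentagon(1)[OF assms] by (intro card_mono) simp_all
  then show ?thesis
    using colours_myc_Kab_pentagon(2)[OF assms] by simp
qed

lemma theta_one_pos_myc_Kab:
  assumes c: "proper_colouring (myc_Kab_verts a b) (myc_Kab_adj a b) 3 c" and "1 \<le> a" "1 \<le> b"
  shows "1 \<le> theta (myc_Kab_verts a b) c 1"
proof -
  have "c ` myc_Kab_pentagon a = {1..3}"
    by (intro card_seteq) (use colours_myc_Kab_pentagon[OF assms] in simp_all)
  then have "1 \<in> c ` myc_Kab_pentagon a"
    by simp
  then obtain v where "v \<in> myc_Kab_pentagon a" and "c v = 1"
    by (rule imageE) simp
  then have "v \<in> {v \<in> myc_Kab_verts a b. c v = 1}"
    using myc_Kab_pentagon_subset[OF \<open>1 \<le> b\<close>] by blast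
  then have "{v \<in> myc_Kab_verts a b. c v = 1} \<noteq> {}"
    by blast
  then show ?thesis
    unfolding theta_def using finite_myc_Kab by (simp add: Suc_le_eq card_gt_0_iff)
qed

(* Distinct vertices with the same image are adjacent; b < a ensures that only the apex is sent
   to Copy (a - 1). Hence the fold is injective on independent sets. *)
fun myc_Kab_fold :: "nat \<Rightarrow> nat myc_vertex \<Rightarrow> nat myc_vertex" where
  "myc_Kab_fold a (Orig x) = (if x < a then Orig x else Copy (x - a))"
| "myc_Kab_fold a (Copy x) = (if x < a then Copy x else Orig (x - a))"
| "myc_Kab_fold a Apex = Copy (a - 1)"

lemma inj_on_myc_Kab_fold:
  assumes "b < a" and "S \<subseteq> myc_Kab_verts a b"
    and "\<And>u v. u \<in> S \<Longrightarrow> v \<in> S \<Longrightarrow> \<not> myc_Kab_adj a b u v"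
  shows "inj_on (myc_Kab_fold a) S"
proof (rule inj_onI)
  fix u v assume "u \<in> S" "v \<in> S" "myc_Kab_fold a u = myc_Kab_fold a v"
  then show "u = v"
    using assms by (cases u; cases v) (fastforce simp: Kab_verts_def Kab_adj_def split: if_splits)+
qed

lemma myc_Kab_fold_image:
  assumes "b < a"
  shows "myc_Kab_fold a ` myc_Kab_verts a b \<subseteq> Orig ` {..<a} \<union> Copy ` {..<a}"
proof
  fix w assume "w \<in> myc_Kab_fold a ` myc_Kab_verts a b"
  then obtain v where "v \<in> myc_Kab_verts a b" and "w = myc_Kab_fold a v"
    by blast
  then show "w \<in> Orig ` {..<a} \<union> Copy ` {..<a}"
    using assms by (cases v) (auto simp: Kab_verts_def)
qed

lemma card_independent_myc_Kab_le:
  assumes "b < a" and S: "S \<subseteq> myc_Kab_verts a b"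
    and "\<And>u v. u \<in> S \<Longrightarrow> v \<in> S \<Longrightarrow> \<not> myc_Kab_adj a b u v"
  shows "card S \<le> 2 * a"
proof -
  have "card S = card (myc_Kab_fold a ` S)"
    using card_image[OF inj_on_myc_Kab_fold[OF assms]] by simp
  also have "\<dots> \<le> card (Orig ` {..<a} \<union> Copy ` {..<a})"
    using myc_Kab_fold_image[OF assms(1)] S by (intro card_mono) auto
  also have "\<dots> \<le> card (Orig ` {..<a}) + card (Copy ` {..<a})"
    by (rule card_Un_le)
  also have "\<dots> \<le> 2 * a"
    using card_image_le[of "{..<a}" Orig] card_image_le[of "{..<a}" Copy] by simp
  finally show ?thesis .
qed

lemma theta_myc_Kab_le:
  assumes c: "proper_colouring (myc_Kab_verts a b) (myc_Kab_adj a b) k c" and "b < a"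
  shows "theta (myc_Kab_verts a b) c i \<le> 2 * a"
  unfolding theta_def
proof (rule card_independent_myc_Kab_le[OF \<open>b < a\<close>])
  fix u v assume "u \<in> {v \<in> myc_Kab_verts a b. c v = i}" "v \<in> {v \<in> myc_Kab_verts a b. c v = i}"
  then show "\<not> myc_Kab_adj a b u v"
    using proper_colouring_adj[OF c, of u v] by auto
qed auto

definition myc_Kab_colouring :: "nat \<Rightarrow> nat myc_vertex \<Rightarrow> nat" where
  "myc_Kab_colouring a v =
     (case v of Apex \<Rightarrow> 1 | Orig x \<Rightarrow> if x < a then 3 else 2 | Copy x \<Rightarrow> if x < a then 3 else 2)"

lemma proper_colouring_myc_Kab_colouring:
  "proper_colouring (myc_Kab_verts a b) (myc_Kab_adj a b) 3 (myc_Kab_colouring a)"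
  unfolding proper_colouring_def
  by (auto simp: myc_verts_def Kab_verts_def Kab_adj_def myc_Kab_colouring_def split: if_splits)

lemma theta_myc_Kab_colouring:
  "theta (myc_Kab_verts a b) (myc_Kab_colouring a) 1 = 1"
  "theta (myc_Kab_verts a b) (myc_Kab_colouring a) 3 = 2 * a"
proof -
  have "{v \<in> myc_Kab_verts a b. myc_Kab_colouring a v = 1} = {Apex}"
  proof (rule set_eqI)
    fix v show "v \<in> {v \<in> myc_Kab_verts a b. myc_Kab_colouring a v = 1} \<longleftrightarrow> v \<in> {Apex}"
      by (cases v) (auto simp: myc_Kab_colouring_def)
  qed
  then show "theta (myc_Kab_verts a b) (myc_Kab_colouring a) 1 = 1"
    by (simp add: theta_def)
  have "{v \<in> myc_Kab_verts a b. myc_Kab_colouring a v = 3} = Orig ` {..<a} \<union> Copy ` {..<a}"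
  proof (rule set_eqI)
    fix v
    show "v \<in> {v \<in> myc_Kab_verts a b. myc_Kab_colouring a v = 3} \<longleftrightarrow> v \<in> Orig ` {..<a} \<union> Copy ` {..<a}"
      by (cases v) (auto simp: myc_Kab_colouring_def Kab_verts_def)
  qed
  moreover have "card (Orig ` {..<a} \<union> Copy ` {..<a}) = 2 * a"
    by (subst card_Un_disjoint) (auto simp: card_image inj_on_def)
  ultimately show "theta (myc_Kab_verts a b) (myc_Kab_colouring a) 3 = 2 * a"
    by (simp add: theta_def)
qed

lemma chromatic_number_myc_Kab:
  assumes "1 \<le> a" "1 \<le> b"
  shows "chromatic_number (myc_Kab_verts a b) (myc_Kab_adj a b) = 3"
  unfolding chromatic_number_def
  by (rule Least_equality)
    (use proper_colouring_myc_Kab_colouring three_le_colours_myc_Kab[OF _ assms] in auto)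

lemma theta_sum_three_myc_Kab:
  assumes "proper_colouring (myc_Kab_verts a b) (myc_Kab_adj a b) 3 c"
  shows "theta (myc_Kab_verts a b) c 1 + theta (myc_Kab_verts a b) c 2
      + theta (myc_Kab_verts a b) c 3 = 2 * a + 2 * b + 1"
  using theta_sum_three[OF finite_myc_Kab assms] card_myc_Kab by simp

lemma colouring_sum_myc_Kab_le:
  assumes c: "proper_colouring (myc_Kab_verts a b) (myc_Kab_adj a b) 3 c" and "b < a" "1 \<le> b"
  shows "colouring_sum (myc_Kab_verts a b) 3 c \<le> 6 * a + 4 * b + 1"
  using colouring_sum_three[of "myc_Kab_verts a b" c] theta_sum_three_myc_Kab[OF c]
    theta_one_pos_myc_Kab[OF c _ \<open>1 \<le> b\<close>] theta_myc_Kab_le[OF c \<open>b < a\<close>, of 3] \<open>b < a\<close>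
  by linarith

lemma colouring_sum_myc_Kab_colouring:
  "colouring_sum (myc_Kab_verts a b) 3 (myc_Kab_colouring a) = 6 * a + 4 * b + 1"
  using colouring_sum_three[of "myc_Kab_verts a b" "myc_Kab_colouring a"]
    theta_sum_three_myc_Kab[OF proper_colouring_myc_Kab_colouring[of a b]]
    theta_myc_Kab_colouring[of a b]
  by linarith

lemma chi_plus_colouring_myc_Kab_colouring:
  assumes "b < a" "1 \<le> b"
  shows "chi_plus_colouring (myc_Kab_verts a b) (myc_Kab_adj a b) (myc_Kab_colouring a)"
proof -
  have "chromatic_number (myc_Kab_verts a b) (myc_Kab_adj a b) = 3"
    using chromatic_number_myc_Kab assms by simp
  then show ?thesis
    unfolding chi_plus_colouring_def Let_def
    using assms proper_colouring_myc_Kab_colouring colouring_sum_myc_Kab_le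
    by (simp add: colouring_sum_myc_Kab_colouring)
qed

lemma theta_chi_plus_colouring_myc_Kab:
  assumes c: "chi_plus_colouring (myc_Kab_verts a b) (myc_Kab_adj a b) c" and "b < a" "1 \<le> b"
  shows "theta (myc_Kab_verts a b) c 1 = 1" "theta (myc_Kab_verts a b) c 2 = 2 * b"
    "theta (myc_Kab_verts a b) c 3 = 2 * a"
proof -
  have chi: "chromatic_number (myc_Kab_verts a b) (myc_Kab_adj a b) = 3"
    using chromatic_number_myc_Kab assms(2,3) by simp
  have proper: "proper_colouring (myc_Kab_verts a b) (myc_Kab_adj a b) 3 c"
    and "colouring_sum (myc_Kab_verts a b) 3 (myc_Kab_colouring a) \<le> colouring_sum (myc_Kab_verts a b) 3 c"
    using c proper_colouring_myc_Kab_colouring unfolding chi_plus_colouring_def Let_def chi by auto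
  then have "6 * a + 4 * b + 1 \<le> colouring_sum (myc_Kab_verts a b) 3 c"
    by (simp add: colouring_sum_myc_Kab_colouring)
  then show "theta (myc_Kab_verts a b) c 1 = 1" "theta (myc_Kab_verts a b) c 2 = 2 * b"
    "theta (myc_Kab_verts a b) c 3 = 2 * a"
    using colouring_sum_three[of "myc_Kab_verts a b" c] theta_sum_three_myc_Kab[OF proper]
      theta_one_pos_myc_Kab[OF proper _ \<open>1 \<le> b\<close>] theta_myc_Kab_le[OF proper \<open>b < a\<close>, of 3] \<open>b < a\<close>
    by linarith+
qed

lemma myc_Kab_mean_identity:
  fixes x y :: real
  assumes "0 \<le> x" "0 \<le> y"
  shows "(1 + 2 * (2 * y) + 3 * (2 * x)) / (2 * x + 2 * y + 1) = 2 + (2 * x - 1) / (2 * x + 2 * y + 1)"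
  using assms by (simp add: field_simps)

lemma myc_Kab_variance_identity:
  fixes x y :: real
  assumes "0 \<le> x" "0 \<le> y"
  defines "N \<equiv> 2 * x + 2 * y + 1"
  defines "m \<equiv> 2 + (2 * x - 1) / N"
  shows "((1 - m)^2 + (2 - m)^2 * (2 * y) + (3 - m)^2 * (2 * x)) / N
    = (16 * x ^ 2 + 4 * y ^ 2 + 8 * x ^ 2 * y + 8 * y ^ 2 * x + 24 * x * y + 8 * x + 2 * y) / N ^ 3"
proof -
  have N: "N > 0"
    using assms(1,2) unfolding N_def by simp
  have deviations: "1 - m = - (4 * x + 2 * y) / N" "2 - m = (1 - 2 * x) / N" "3 - m = (2 * y + 2) / N"
    using N unfolding m_def N_def by (simp_all add: field_simps)
  have "((1 - m)^2 + (2 - m)^2 * (2 * y) + (3 - m)^2 * (2 * x)) / N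
      = ((4 * x + 2 * y)^2 + (1 - 2 * x)^2 * (2 * y) + (2 * y + 2)^2 * (2 * x)) / N ^ 3"
    unfolding deviations using N by (simp add: field_simps power2_eq_square power3_eq_cube)
  also have "(4 * x + 2 * y)^2 + (1 - 2 * x)^2 * (2 * y) + (2 * y + 2)^2 * (2 * x)
      = 16 * x ^ 2 + 4 * y ^ 2 + 8 * x ^ 2 * y + 8 * y ^ 2 * x + 24 * x * y + 8 * x + 2 * y"
    by (simp add: algebra_simps power2_eq_square)
  finally show ?thesis .
qed

theorem theorem3p3:
  fixes a b n :: nat
  assumes "a > b" and "b \<ge> 1" and "n = a + b"
  shows "E_chi_plus (myc_verts (Kab_verts a b)) (myc_adj (Kab_adj a b))
           = 2 + (2 * real a - 1) / (2 * real a + 2 * real b + 1)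
       \<and> V_chi_plus (myc_verts (Kab_verts a b)) (myc_adj (Kab_adj a b))
           = (16 * real a ^ 2 + 4 * real b ^ 2 + 8 * real a ^ 2 * real b + 8 * real b ^ 2 * real a
              + 24 * real a * real b + 8 * real a + 2 * real b) / (2 * real n + 1) ^ 3"
proof -
  define c where "c = (SOME c. chi_plus_colouring (myc_Kab_verts a b) (myc_Kab_adj a b) c)"
  have "chi_plus_colouring (myc_Kab_verts a b) (myc_Kab_adj a b) c"
    unfolding c_def using chi_plus_colouring_myc_Kab_colouring[OF assms(1,2)]
    by (rule someI[where P = "chi_plus_colouring (myc_Kab_verts a b) (myc_Kab_adj a b)"])
  note theta = theta_chi_plus_colouring_myc_Kab[OF this assms(1,2)]
  have card: "real (card (myc_Kab_verts a b)) = 2 * real a + 2 * real b + 1"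
    using card_myc_Kab by simp
  have mean: "colouring_mean (myc_Kab_verts a b) 3 c = 2 + (2 * real a - 1) / (2 * real a + 2 * real b + 1)"
    unfolding colouring_mean_three theta card using myc_Kab_mean_identity by simp
  have "colouring_variance (myc_Kab_verts a b) 3 c
      = (16 * real a ^ 2 + 4 * real b ^ 2 + 8 * real a ^ 2 * real b + 8 * real b ^ 2 * real a
         + 24 * real a * real b + 8 * real a + 2 * real b) / (2 * real a + 2 * real b + 1) ^ 3"
    unfolding colouring_variance_three mean theta card using myc_Kab_variance_identity by simp
  moreover have "chromatic_number (myc_Kab_verts a b) (myc_Kab_adj a b) = 3"
    using chromatic_number_myc_Kab assms(1,2) by simp
  ultimately show ?thesis
    unfolding E_chi_plus_def V_chi_plus_def c_def[symmetric] using mean assms(3) by simp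
qed

end
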